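(* Let $\mathcal{K}$ be a convex cone in a finite-dimensional Euclidean space and ${\mathcal F}_t\unlhd\mathcal{K}$ a face. In the procedure ${\mathcal F}_0=\mathcal{K}$, ${\mathcal F}_{i+1}={\mathcal F}_i\cap d_i^{\perp}$ with $d_i\in{\mathcal F}_i^*$, $d_i\notin{\mathcal F}_i^{\perp}$, $d_i\perp{\mathcal F}_t$ (continued until no such $d_i$ exists), choosing at every step $d_i\in\operatorname{ri}\big({\mathcal F}_i^*\cap {\mathcal F}_t^{\perp}\big)$ yields the minimum possible number of steps, i.e., the number of steps equals the singularity degree of ${\mathcal F}_t$ over $\mathcal{K}$.
   Context: The singularity degree of a face ${\mathcal F}_t\unlhd\mathcal{K}$ over $\mathcal{K}$ is the minimum number $d$ of steps of a sequence ${\mathcal F}_0=\mathcal{K}$, ${\mathcal F}_{i+1}={\mathcal F}_i\cap d_i^{\perp}$, with $d_i\in{\mathcal F}_i^*$, $d_i\notin{\mathcal F}_i^\perp$, $d_i\perp{\mathcal F}_t$, such that ${\mathcal F}_d={\mathcal F}_t$. Here $S^*$ is the dual cone, $S^\perp$ the orthogonal complement, $\operatorname{ri}$ the relative interior. *)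

theory Defs
  imports "HOL-Analysis.Analysis"
begin

definition dual_cone :: "'a::real_inner set \<Rightarrow> 'a set" where
  "dual_cone S = {y. \<forall>x\<in>S. 0 \<le> x \<bullet> y}"

definition fr_face :: "'a::real_inner set \<Rightarrow> 'a list \<Rightarrow> nat \<Rightarrow> 'a set" where
  "fr_face K ds i = foldl (\<lambda>F d. F \<inter> orthogonal_comp {d}) K (take i ds)"

definition fr_step :: "'a::real_inner set \<Rightarrow> 'a set \<Rightarrow> 'a \<Rightarrow> bool" where
  "fr_step F Ft d \<longleftrightarrow> d \<in> dual_cone F \<and> d \<notin> orthogonal_comp F \<and> d \<in> orthogonal_comp Ft"

definition fr_seq :: "'a::real_inner set \<Rightarrow> 'a set \<Rightarrow> 'a list \<Rightarrow> bool" where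
  "fr_seq K Ft ds \<longleftrightarrow> (\<forall>i<length ds. fr_step (fr_face K ds i) Ft (ds ! i))"

definition sing_degree :: "'a::real_inner set \<Rightarrow> 'a set \<Rightarrow> nat" where
  "sing_degree K Ft = (LEAST n. \<exists>ds. length ds = n \<and> fr_seq K Ft ds \<and> fr_face K ds n = Ft)"

end

theory Submission
  imports Defs
begin

text \<open>Let d_i lie in ri(F_i^* \<inter> Ft^\<perp>). Any admissible direction e at a face containing F_i
  lies in the same cone F_i^* \<inter> Ft^\<perp>, and a linear functional nonnegative on a set that
  vanishes at a relative interior point vanishes on the whole set. Hence every point of
  F_i \<inter> d_i^\<perp> is orthogonal to e: the relative interior choice cuts at least as deep as any
  other choice. By induction the faces of this sequence are contained in those of any facial
  reduction sequence, step by step (once it stops, every admissible direction is orthogonal to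
  its last face). As each step of a facial reduction sequence strictly shrinks the face while
  keeping Ft, the relative interior sequence reaches Ft no later than any other.\<close>

lemma inner_eq_0_if_rel_interior_inner_eq_0:
  fixes C :: "'a::euclidean_space set"
  assumes d: "d \<in> rel_interior C" and c: "c \<in> C"
    and nonneg: "\<And>y. y \<in> C \<Longrightarrow> 0 \<le> x \<bullet> y" and "x \<bullet> d = 0"
  shows "x \<bullet> c = 0"
proof (cases "c = d")
  case True
  then show ?thesis using \<open>x \<bullet> d = 0\<close> by simp
next
  case False
  from d obtain e where e: "e > 0" "cball d e \<inter> affine hull C \<subseteq> C" "d \<in> C"
    by (auto simp: mem_rel_interior_cball)
  define t where "t = e / norm (c - d)"
  have "norm (c - d) > 0" using False by simp
  then have "t > 0" using e by (simp add: t_def)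
  \<comment> \<open>the point beyond d on the line from c, still in C since d is relatively interior\<close>
  define p where "p = (1 + t) *\<^sub>R d + (- t) *\<^sub>R c"
  have "p \<in> affine hull C"
    unfolding p_def by (rule mem_affine[OF affine_affine_hull]) (use e c hull_inc in auto)
  moreover have "dist d p = e"
  proof -
    have "d - p = t *\<^sub>R (c - d)" by (simp add: p_def algebra_simps)
    then have "dist d p = t * norm (c - d)" using \<open>t > 0\<close> by (simp add: dist_norm)
    then show ?thesis using \<open>norm (c - d) > 0\<close> by (simp add: t_def)
  qed
  ultimately have "p \<in> C" using e by auto
  then have "0 \<le> x \<bullet> p" by (rule nonneg)
  also have "x \<bullet> p = - t * (x \<bullet> c)"
    using \<open>x \<bullet> d = 0\<close> by (simp add: p_def inner_diff_right inner_add_right)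
  finally have "x \<bullet> c \<le> 0" using \<open>t > 0\<close> by (simp add: mult_le_0_iff)
  with nonneg[OF c] show ?thesis by simp
qed

lemma dual_cone_antimono: "A \<subseteq> B \<Longrightarrow> dual_cone B \<subseteq> dual_cone A"
  by (auto simp: dual_cone_def)

lemma subset_orthogonal_comp_singleton_iff: "A \<subseteq> orthogonal_comp {d} \<longleftrightarrow> d \<in> orthogonal_comp A"
  by (auto simp: orthogonal_comp_def orthogonal_def inner_commute)

lemma inter_orthogonal_comp_rel_interior_subset:
  fixes G F Ft :: "'a::euclidean_space set"
  assumes "G \<subseteq> F"
    and "d \<in> rel_interior (dual_cone G \<inter> orthogonal_comp Ft)"
    and "e \<in> dual_cone F \<inter> orthogonal_comp Ft"
  shows "G \<inter> orthogonal_comp {d} \<subseteq> F \<inter> orthogonal_comp {e}"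
proof
  fix x assume x: "x \<in> G \<inter> orthogonal_comp {d}"
  have "e \<in> dual_cone G \<inter> orthogonal_comp Ft"
    using assms(1,3) dual_cone_antimono by blast
  with assms(2) have "x \<bullet> e = 0"
    by (rule inner_eq_0_if_rel_interior_inner_eq_0)
      (use x in \<open>auto simp: dual_cone_def orthogonal_comp_def orthogonal_def inner_commute\<close>)
  then show "x \<in> F \<inter> orthogonal_comp {e}"
    using x assms(1) by (auto simp: orthogonal_comp_def orthogonal_def inner_commute)
qed

lemma no_fr_step_imp_orthogonal_comp:
  assumes "\<not> (\<exists>d. fr_step G Ft d)" and "e \<in> dual_cone G \<inter> orthogonal_comp Ft"
  shows "e \<in> orthogonal_comp G"
  using assms by (auto simp: fr_step_def)

lemma fr_face_0 [simp]: "fr_face K ds 0 = K"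
  by (simp add: fr_face_def)

lemma fr_face_Suc:
  "i < length ds \<Longrightarrow> fr_face K ds (Suc i) = fr_face K ds i \<inter> orthogonal_comp {ds ! i}"
  by (simp add: fr_face_def take_Suc_conv_app_nth)

lemma fr_face_beyond_length: "length ds \<le> i \<Longrightarrow> fr_face K ds i = fr_face K ds (length ds)"
  by (simp add: fr_face_def)

lemma fr_face_Suc_subset: "fr_face K ds (Suc i) \<subseteq> fr_face K ds i"
proof (cases "i < length ds")
  case False
  then show ?thesis using fr_face_beyond_length[of ds i K] fr_face_beyond_length[of ds "Suc i" K] by simp
qed (auto simp: fr_face_Suc)

lemma fr_face_antimono: "i \<le> j \<Longrightarrow> fr_face K ds j \<subseteq> fr_face K ds i"
  using lift_Suc_antimono_le[of "fr_face K ds", OF fr_face_Suc_subset] by blast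

lemma fr_seq_fr_face_Suc_psubset:
  assumes "fr_seq K Ft ds" and "i < length ds"
  shows "fr_face K ds (Suc i) \<subset> fr_face K ds i"
proof -
  have "\<not> fr_face K ds i \<subseteq> orthogonal_comp {ds ! i}"
    using assms by (simp add: fr_seq_def fr_step_def subset_orthogonal_comp_singleton_iff)
  then obtain x where "x \<in> fr_face K ds i" "x \<notin> orthogonal_comp {ds ! i}"
    by blast
  then show ?thesis using assms(2) by (auto simp: fr_face_Suc)
qed

lemma fr_seq_fr_face_psubset:
  assumes "fr_seq K Ft ds" and "i < length ds"
  shows "fr_face K ds (length ds) \<subset> fr_face K ds i"
  using fr_seq_fr_face_Suc_psubset[OF assms] fr_face_antimono[of "Suc i" "length ds" K ds] assms(2)
  by auto

lemma fr_seq_target_subset_fr_face: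
  assumes "fr_seq K Ft ds" and "Ft \<subseteq> K"
  shows "Ft \<subseteq> fr_face K ds i"
proof (induction i)
  case 0
  then show ?case using assms(2) by simp
next
  case (Suc i)
  show ?case
  proof (cases "i < length ds")
    case True
    then have "Ft \<subseteq> orthogonal_comp {ds ! i}"
      using assms(1) by (simp add: fr_seq_def fr_step_def subset_orthogonal_comp_singleton_iff)
    then show ?thesis using Suc True by (simp add: fr_face_Suc)
  next
    case False
    then show ?thesis using Suc fr_face_beyond_length[of ds i K] fr_face_beyond_length[of ds "Suc i" K]
      by simp
  qed
qed

lemma fr_face_rel_interior_choice_subset:
  fixes K Ft :: "'a::euclidean_space set"
  assumes ri: "\<forall>i<length ds. ds ! i \<in> rel_interior (dual_cone (fr_face K ds i) \<inter> orthogonal_comp Ft)"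
    and stop: "\<not> (\<exists>d. fr_step (fr_face K ds (length ds)) Ft d)"
    and es: "fr_seq K Ft es" and "i \<le> length es"
  shows "fr_face K ds (min i (length ds)) \<subseteq> fr_face K es i"
  using \<open>i \<le> length es\<close>
proof (induction i)
  case 0
  then show ?case by simp
next
  case (Suc i)
  let ?G = "fr_face K ds (min i (length ds))" and ?F = "fr_face K es i"
  have IH: "?G \<subseteq> ?F" and "i < length es" using Suc by auto
  then have e: "es ! i \<in> dual_cone ?F \<inter> orthogonal_comp Ft"
    using es by (simp add: fr_seq_def fr_step_def)
  have "fr_face K ds (min (Suc i) (length ds)) \<subseteq> ?F \<inter> orthogonal_comp {es ! i}"
  proof (cases "i < length ds")
    case True
    then show ?thesis
      using inter_orthogonal_comp_rel_interior_subset[of ?G ?F "ds ! i" Ft "es ! i"] IH e ri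
      by (simp add: fr_face_Suc)
  next
    case False
    then have "es ! i \<in> orthogonal_comp ?G"
      using no_fr_step_imp_orthogonal_comp[OF stop] e dual_cone_antimono[OF IH] by auto
    then show ?thesis
      using False IH by (simp add: subset_orthogonal_comp_singleton_iff)
  qed
  then show ?case using \<open>i < length es\<close> by (simp add: fr_face_Suc)
qed

lemma fr_seq_rel_interior_choice_shortest:
  fixes K Ft :: "'a::euclidean_space set"
  assumes "Ft \<subseteq> K" and "fr_seq K Ft ds"
    and "\<forall>i<length ds. ds ! i \<in> rel_interior (dual_cone (fr_face K ds i) \<inter> orthogonal_comp Ft)"
    and "\<not> (\<exists>d. fr_step (fr_face K ds (length ds)) Ft d)"
    and es: "fr_seq K Ft es" "fr_face K es (length es) = Ft"
  shows "length ds \<le> length es \<and> fr_face K ds (length ds) = Ft"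
proof -
  have below: "fr_face K ds (min (length es) (length ds)) \<subseteq> Ft"
    using fr_face_rel_interior_choice_subset[OF assms(3,4) es(1) order.refl] es(2) by simp
  have above: "Ft \<subseteq> fr_face K ds (length ds)"
    using fr_seq_target_subset_fr_face[OF assms(2,1)] .
  have "length ds \<le> length es"
  proof (rule ccontr)
    assume "\<not> length ds \<le> length es"
    then show False
      using below above fr_seq_fr_face_psubset[OF assms(2), of "length es"] by simp
  qed
  then show ?thesis using below above by simp
qed

theorem mainTheorem3:
  fixes K Ft :: "'a::euclidean_space set" and ds :: "'a list"
  assumes "convex_cone K"
    and "Ft face_of K"
    and "\<exists>es. fr_seq K Ft es \<and> fr_face K es (length es) = Ft"
    and "fr_seq K Ft ds"
    and "\<forall>i<length ds. ds ! i \<in> rel_interior (dual_cone (fr_face K ds i) \<inter> orthogonal_comp Ft)"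
    and "\<not> (\<exists>d. fr_step (fr_face K ds (length ds)) Ft d)"
  shows "fr_face K ds (length ds) = Ft \<and> length ds = sing_degree K Ft"
proof -
  have "Ft \<subseteq> K" using assms(2) face_of_imp_subset by blast
  note shortest = fr_seq_rel_interior_choice_shortest[OF this assms(4-6)]
  obtain es where "fr_seq K Ft es" "fr_face K es (length es) = Ft" using assms(3) by blast
  then have reaches: "fr_face K ds (length ds) = Ft" using shortest by simp
  have "sing_degree K Ft = length ds"
    unfolding sing_degree_def
  proof (rule Least_equality)
    show "\<exists>es. length es = length ds \<and> fr_seq K Ft es \<and> fr_face K es (length ds) = Ft"
      using reaches assms(4) by blast
  next
    fix m assume "\<exists>es. length es = m \<and> fr_seq K Ft es \<and> fr_face K es m = Ft"
    then obtain es where "length es = m" "fr_seq K Ft es" "fr_face K es m = Ft"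
      by blast
    then show "length ds \<le> m" using shortest[of es] by simp
  qed
  then show ?thesis using reaches by simp
qed

end
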